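(* Let $\mathbb{F}_q$ have characteristic $p\ne2$, $f(X)=aX^2+c\in\mathbb{F}_q[X]$ with $a\neq0$, $r\ge 1$, $k\ge 2$. For every $(x_1,\dots,x_k)\in\overline{\mathbb{F}_q}^{\,k}$ with $f^r(x_1)=\dots=f^r(x_k)$ there exist a permutation $\sigma\in S_k$ and integers $d_1,\dots,d_{k-1}\in\{-1,0,\dots,r-1\}$ such that $\phi(x_{\sigma(i)},x_{\sigma(i+1)};d_i)=0$ for $1\le i\le k-1$, and such that for every $1\le s<t\le k-1$ the maximum of $d_s,\dots,d_t$ is either $-1$ or is attained at exactly one index.
   Context: Iterates: $f^0(X)=X$, $f^{j+1}(X)=f(f^j(X))$. Define $\phi(X,Y;-1)=X-Y$ and $\phi(X,Y;d)=f^d(X)+f^d(Y)$ for $d\ge0$. *)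

theory Defs
  imports "HOL-Algebra.Algebraic_Closure_Type" "HOL-Combinatorics.Permutations"
begin

definition quad_map :: "'k::field \<Rightarrow> 'k \<Rightarrow> 'k alg_closure \<Rightarrow> 'k alg_closure" where
  "quad_map a c z = to_ac a * z ^ 2 + to_ac c"

definition phi :: "('b::ab_group_add \<Rightarrow> 'b) \<Rightarrow> 'b \<Rightarrow> 'b \<Rightarrow> int \<Rightarrow> 'b" where
  "phi f u v d = (if d = -1 then u - v else (f ^^ nat d) u + (f ^^ nat d) v)"

end

theory Submission
  imports Defs
begin

text \<open>Since f(u) = f(v) forces u = \<plusminus>v, points sharing f^(r+1) split into two classes on which
  f^r takes opposite values y and -y. Arranging each class by induction on r and concatenating
  the two arrangements, the junction is a pair with f^r(u) + f^r(v) = 0, i.e. a link of depth r,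
  which exceeds every depth occurring inside the classes; so every window of links containing
  the junction has its maximum exactly there.\<close>

lemma quad_map_eq_imp_eq_or_neg:
  fixes a c :: "'k::field"
  assumes "a \<noteq> 0" "quad_map a c u = quad_map a c v"
  shows "u = v \<or> u = - v"
proof -
  have "to_ac a * ((u - v) * (u + v)) = 0"
    using assms(2) by (simp add: quad_map_def power2_eq_square algebra_simps)
  moreover have "to_ac a \<noteq> 0" using assms(1) by (metis to_ac_0 to_ac_eq_iff)
  ultimately show ?thesis by (auto simp: eq_neg_iff_add_eq_0)
qed

definition peaked_on :: "(nat \<Rightarrow> int) \<Rightarrow> nat set \<Rightarrow> bool" where
  "peaked_on d S \<longleftrightarrow> (\<forall>j\<in>S. d j = -1) \<or> (\<exists>i\<in>S. \<forall>j\<in>S. j \<noteq> i \<longrightarrow> d j < d i)"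

lemma peaked_on_cong: "(\<And>j. j \<in> S \<Longrightarrow> d j = e j) \<Longrightarrow> peaked_on d S \<longleftrightarrow> peaked_on e S"
  by (simp add: peaked_on_def)

lemma peaked_on_image:
  assumes "inj_on h S" "peaked_on (d \<circ> h) S"
  shows "peaked_on d (h ` S)"
  using assms unfolding peaked_on_def inj_on_def by fastforce

lemma peaked_on_Max:
  assumes "finite S" "S \<noteq> {}" "peaked_on d S"
  shows "Max (d ` S) = -1 \<or> card {i\<in>S. d i = Max (d ` S)} = 1"
  using assms(3) unfolding peaked_on_def
proof
  assume "\<forall>j\<in>S. d j = -1"
  then have "d ` S = {-1}" using assms(2) by auto
  then show ?thesis by simp
next
  assume "\<exists>i\<in>S. \<forall>j\<in>S. j \<noteq> i \<longrightarrow> d j < d i"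
  then obtain i where i: "i \<in> S" and less: "\<And>j. j \<in> S \<Longrightarrow> j \<noteq> i \<Longrightarrow> d j < d i" by blast
  have "Max (d ` S) = d i"
    using assms(1) i less by (intro Max_eqI) (auto intro: less_imp_le)
  then have "{j\<in>S. d j = Max (d ` S)} = {i}" using i less by fastforce
  then show ?thesis by simp
qed

definition unique_window_max :: "int list \<Rightarrow> bool" where
  "unique_window_max ds \<longleftrightarrow> (\<forall>s t. s \<le> t \<longrightarrow> t < length ds \<longrightarrow> peaked_on (nth ds) {s..t})"

lemma unique_window_max_replicate: "unique_window_max (replicate n (-1))"
  by (simp add: unique_window_max_def peaked_on_def)

lemma unique_window_max_append_peak:
  assumes xs: "unique_window_max xs" and ys: "unique_window_max ys"
    and below: "\<And>e. e \<in> set xs \<union> set ys \<Longrightarrow> e < R"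
  shows "unique_window_max (xs @ R # ys)"
  unfolding unique_window_max_def
proof (intro allI impI)
  fix s t assume st: "s \<le> t" "t < length (xs @ R # ys)"
  let ?zs = "xs @ R # ys" and ?n = "length xs"
  consider "t < ?n" | "?n < s" | "?n \<in> {s..t}" by fastforce
  then show "peaked_on (nth ?zs) {s..t}"
  proof cases
    case 1
    then have "peaked_on (nth xs) {s..t}" using xs st(1) by (simp add: unique_window_max_def)
    then show ?thesis using 1 by (subst peaked_on_cong[of _ _ "nth xs"]) (auto simp: nth_append)
  next
    case 2
    define m where "m = Suc ?n"
    have shift: "(\<lambda>j. j + m) ` {s - m..t - m} = {s..t}"
    proof -
      have "m \<le> s" using 2 by (simp add: m_def)
      then show ?thesis using st(1) by simp
    qed
    have "peaked_on (nth ys) {s - m..t - m}"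
      using ys st 2 unfolding unique_window_max_def m_def by auto
    then have "peaked_on (nth ?zs \<circ> (\<lambda>j. j + m)) {s - m..t - m}"
      by (subst peaked_on_cong[of _ _ "nth ys"]) (auto simp: nth_append m_def)
    then have "peaked_on (nth ?zs) ((\<lambda>j. j + m) ` {s - m..t - m})"
      by (intro peaked_on_image) auto
    then show ?thesis by (simp only: shift)
  next
    case 3
    have "?zs ! j < R" if j: "j < length ?zs" "j \<noteq> ?n" for j
    proof -
      consider "j < ?n" | "?n < j" using j(2) by linarith
      then have "?zs ! j \<in> set xs \<union> set ys"
      proof cases
        case 1
        then show ?thesis by (simp add: nth_append)
      next
        case 2
        then have "?zs ! j = ys ! (j - Suc ?n)" by (simp add: nth_append nth_Cons')
        moreover have "j - Suc ?n < length ys" using 2 j(1) by simp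
        ultimately show ?thesis by simp
      qed
      then show ?thesis using below by blast
    qed
    then show ?thesis using 3 st(2) unfolding peaked_on_def
      by (intro disjI2 bexI[of _ ?n]) auto
  qed
qed

definition phi_chain :: "('b::ab_group_add \<Rightarrow> 'b) \<Rightarrow> nat \<Rightarrow> 'b list \<Rightarrow> int list \<Rightarrow> bool" where
  "phi_chain g r us ds \<longleftrightarrow> length ds = length us - 1 \<and>
     (\<forall>i<length ds. ds ! i \<in> {-1..int r - 1} \<and> phi g (us ! i) (us ! Suc i) (ds ! i) = 0)"

lemma phi_chain_mono: "phi_chain g r us ds \<Longrightarrow> r \<le> r' \<Longrightarrow> phi_chain g r' us ds"
  by (fastforce simp: phi_chain_def)

lemma phi_chain_const: "(\<And>u v. u \<in> set us \<Longrightarrow> v \<in> set us \<Longrightarrow> u = v) \<Longrightarrow>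
    phi_chain g 0 us (replicate (length us - 1) (-1))"
  by (simp add: phi_chain_def phi_def)

lemma phi_chain_append:
  assumes us: "phi_chain g r us ds" and vs: "phi_chain g r vs es" and "us \<noteq> []" "vs \<noteq> []"
    and junction: "(g ^^ r) (last us) + (g ^^ r) (hd vs) = 0"
  shows "phi_chain g (Suc r) (us @ vs) (ds @ int r # es)"
  unfolding phi_chain_def
proof (intro conjI[OF _ allI] impI)
  let ?n = "length us" and ?ws = "us @ vs" and ?fs = "ds @ int r # es"
  have len: "length ds = ?n - 1" "length es = length vs - 1"
    using us vs by (simp_all add: phi_chain_def)
  then show "length ?fs = length ?ws - 1" using assms(3,4) by (simp add: Suc_leI)
  fix i assume i: "i < length ?fs"
  consider "i < ?n - 1" | "i = ?n - 1" | "?n \<le> i" by linarith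
  then show "?fs ! i \<in> {-1..int (Suc r) - 1} \<and> phi g (?ws ! i) (?ws ! Suc i) (?fs ! i) = 0"
  proof cases
    case 1
    then show ?thesis using us len by (auto simp: phi_chain_def nth_append)
  next
    case 2
    then have "?ws ! i = last us" "?ws ! Suc i = hd vs"
      using assms(3,4) by (simp_all add: nth_append last_conv_nth hd_conv_nth)
    then show ?thesis using 2 len junction by (simp add: nth_append phi_def)
  next
    case 3
    define j where "j = i - ?n"
    have "length ?fs = ?n + length es" using len assms(3) by simp
    then have "i = j + ?n" "j < length es" using 3 i unfolding j_def by linarith+
    moreover have "?fs = (ds @ [int r]) @ es" "length (ds @ [int r]) = ?n"
      using len assms(3) by simp_all
    ultimately have "?fs ! i = es ! j" "?ws ! i = vs ! j" "?ws ! Suc i = vs ! Suc j"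
      by (simp_all only: nth_append) simp_all
    then show ?thesis using vs \<open>j < length es\<close> by (auto simp: phi_chain_def)
  qed
qed

lemma phi_chain_bound: "phi_chain g r us ds \<Longrightarrow> e \<in> set ds \<Longrightarrow> e < int r"
  by (auto simp: phi_chain_def in_set_conv_nth)

theorem phi_chain_arrangement:
  fixes g :: "'b::ab_group_add \<Rightarrow> 'b" and x :: "'a \<Rightarrow> 'b"
  assumes square_like: "\<And>u v. g u = g v \<Longrightarrow> u = v \<or> u = - v"
    and "\<forall>i\<in>set is. \<forall>j\<in>set is. (g ^^ r) (x i) = (g ^^ r) (x j)"
  shows "\<exists>js ds. mset js = mset is \<and> phi_chain g r (map x js) ds \<and> unique_window_max ds"
  using assms(2)
proof (induction r arbitrary: "is")
  case 0
  have "x i = x j" if "i \<in> set is" "j \<in> set is" for i j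
    using 0 that unfolding funpow_0 by blast
  then have "phi_chain g 0 (map x is) (replicate (length (map x is) - 1) (-1))"
    by (intro phi_chain_const, unfold set_map) blast
  then show ?case using unique_window_max_replicate by blast
next
  case (Suc r)
  show ?case
  proof (cases "is = []")
    case True
    then show ?thesis by (auto simp: phi_chain_def unique_window_max_def)
  next
    case False
    define y where "y = (g ^^ r) (x (hd is))"
    define A where "A = filter (\<lambda>i. (g ^^ r) (x i) = y) is"
    define B where "B = filter (\<lambda>i. (g ^^ r) (x i) \<noteq> y) is"
    have on_B: "(g ^^ r) (x i) = - y" if "i \<in> set B" for i
    proof -
      have "i \<in> set is" "hd is \<in> set is" using that False by (simp_all add: B_def)
      then have "(g ^^ Suc r) (x i) = (g ^^ Suc r) (x (hd is))" using Suc.prems by blast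
      then have "g ((g ^^ r) (x i)) = g y" by (simp add: y_def)
      moreover have "(g ^^ r) (x i) \<noteq> y" using that by (simp add: B_def)
      ultimately show ?thesis using square_like by blast
    qed
    have "\<forall>i\<in>set A. \<forall>j\<in>set A. (g ^^ r) (x i) = (g ^^ r) (x j)" by (simp add: A_def)
    then obtain jsA dsA where A: "mset jsA = mset A" "phi_chain g r (map x jsA) dsA" "unique_window_max dsA"
      using Suc.IH by blast
    have "\<forall>i\<in>set B. \<forall>j\<in>set B. (g ^^ r) (x i) = (g ^^ r) (x j)" using on_B by simp
    then obtain jsB dsB where B: "mset jsB = mset B" "phi_chain g r (map x jsB) dsB" "unique_window_max dsB"
      using Suc.IH by blast
    have split: "mset A + mset B = mset is" by (simp add: A_def B_def)
    show ?thesis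
    proof (cases "B = []")
      case True
      then show ?thesis using A split phi_chain_mono[OF A(2), of "Suc r"] by auto
    next
      case False
      have "hd is \<in> set A" using \<open>is \<noteq> []\<close> by (simp add: A_def y_def)
      then have "jsA \<noteq> []" using A(1) by auto
      moreover have "jsB \<noteq> []" using B(1) False by auto
      moreover have "set jsA = set A" "set jsB = set B" using A(1) B(1) by (auto dest: mset_eq_setD)
      ultimately have "last jsA \<in> set A" "hd jsB \<in> set B" by auto
      then have "(g ^^ r) (x (last jsA)) + (g ^^ r) (x (hd jsB)) = 0"
        using on_B by (simp add: A_def)
      then have "phi_chain g (Suc r) (map x jsA @ map x jsB) (dsA @ int r # dsB)"
        using phi_chain_append[OF A(2) B(2)] \<open>jsA \<noteq> []\<close> \<open>jsB \<noteq> []\<close>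
        by (simp add: last_map hd_map)
      moreover have "unique_window_max (dsA @ int r # dsB)"
        using A(3) B(3) phi_chain_bound[OF A(2)] phi_chain_bound[OF B(2)]
        by (intro unique_window_max_append_peak) auto
      moreover have "mset (jsA @ jsB) = mset is" using A(1) B(1) split by simp
      ultimately show ?thesis by (metis map_append)
    qed
  qed
qed

lemma permutes_nth_shift:
  assumes "distinct js" "set js = {1..k}"
  shows "(\<lambda>i. if i \<in> {1..k} then js ! (i - 1) else i) permutes {1..k}"
proof (rule bij_imp_permutes)
  have len: "length js = k" using assms distinct_card by fastforce
  have "bij_betw (\<lambda>i. i - 1) {1..k} {..<k}"
    by (rule bij_betwI[where g = Suc]) auto
  moreover have "bij_betw ((!) js) {..<k} {1..k}"
    using assms len by (intro bij_betw_nth) auto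
  ultimately have "bij_betw ((!) js \<circ> (\<lambda>i. i - 1)) {1..k} {1..k}"
    by (rule bij_betw_trans)
  then show "bij_betw (\<lambda>i. if i \<in> {1..k} then js ! (i - 1) else i) {1..k} {1..k}"
    by (rule bij_betw_cong[THEN iffD1, rotated]) simp
qed auto

lemma unique_window_max_shift:
  assumes "unique_window_max ds" "1 \<le> s" "s \<le> t" "t \<le> length ds"
  shows "peaked_on (\<lambda>i. ds ! (i - 1)) {s..t}"
proof -
  have shift: "Suc ` {s - 1..t - 1} = {s..t}" using assms(2,3) by simp
  have "peaked_on (nth ds) {s - 1..t - 1}"
    using assms unfolding unique_window_max_def by auto
  then have "peaked_on (\<lambda>i. ds ! (i - 1)) (Suc ` {s - 1..t - 1})"
    by (intro peaked_on_image) (auto simp: o_def)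
  then show ?thesis by (simp only: shift)
qed

lemma phi_chain_permutes:
  assumes js: "mset js = mset [1..<Suc k]"
    and chain: "phi_chain g r (map x js) ds" and peaks: "unique_window_max ds"
  shows "\<exists>\<sigma> d. \<sigma> permutes {1..k} \<and>
     (\<forall>i\<in>{1..k-1}. d i \<in> {-1..int r - 1} \<and> phi g (x (\<sigma> i)) (x (\<sigma> (i+1))) (d i) = 0) \<and>
     (\<forall>s t. 1 \<le> s \<and> s < t \<and> t \<le> k - 1 \<longrightarrow>
        Max (d ` {s..t}) = -1 \<or> card {i\<in>{s..t}. d i = Max (d ` {s..t})} = 1)"
proof -
  have "length js = k" using mset_eq_length[OF js] by simp
  have "distinct js" using mset_eq_imp_distinct_iff[OF js] by simp
  have "set js = {1..k}" using mset_eq_setD[OF js] by auto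
  have "length ds = k - 1" using chain \<open>length js = k\<close> by (simp add: phi_chain_def)
  define \<sigma> where "\<sigma> = (\<lambda>i. if i \<in> {1..k} then js ! (i - 1) else i)"
  define d where "d = (\<lambda>i. ds ! (i - 1))"
  have "\<sigma> permutes {1..k}"
    unfolding \<sigma>_def using \<open>distinct js\<close> \<open>set js = {1..k}\<close> by (rule permutes_nth_shift)
  moreover have "d i \<in> {-1..int r - 1} \<and> phi g (x (\<sigma> i)) (x (\<sigma> (i+1))) (d i) = 0"
    if "i \<in> {1..k-1}" for i
  proof -
    have "i - 1 < length ds" "Suc (i - 1) < length js"
      using that \<open>length ds = k - 1\<close> \<open>length js = k\<close> by auto
    then have "d i \<in> {-1..int r - 1} \<and> phi g (x (js ! (i - 1))) (x (js ! Suc (i - 1))) (d i) = 0"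
      using chain unfolding phi_chain_def d_def by auto
    moreover have "\<sigma> i = js ! (i - 1)" "\<sigma> (i + 1) = js ! Suc (i - 1)"
      using that by (auto simp: \<sigma>_def)
    ultimately show ?thesis by simp
  qed
  moreover have "Max (d ` {s..t}) = -1 \<or> card {i\<in>{s..t}. d i = Max (d ` {s..t})} = 1"
    if "1 \<le> s \<and> s < t \<and> t \<le> k - 1" for s t
    using that \<open>length ds = k - 1\<close> unique_window_max_shift[OF peaks, of s t]
    by (intro peaked_on_Max) (auto simp: d_def)
  ultimately show ?thesis by blast
qed

theorem lemma5:
  fixes a c :: "'k::{finite,field}" and r k :: nat and x :: "nat \<Rightarrow> 'k alg_closure"
  assumes "CHAR('k) \<noteq> 2" and "a \<noteq> 0" and "r \<ge> 1" and "k \<ge> 2"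
    and "\<forall>i\<in>{1..k}. \<forall>j\<in>{1..k}. (quad_map a c ^^ r) (x i) = (quad_map a c ^^ r) (x j)"
  shows "\<exists>\<sigma> d. \<sigma> permutes {1..k} \<and>
     (\<forall>i\<in>{1..k-1}. d i \<in> {-1..int r - 1} \<and> phi (quad_map a c) (x (\<sigma> i)) (x (\<sigma> (i+1))) (d i) = 0) \<and>
     (\<forall>s t. 1 \<le> s \<and> s < t \<and> t \<le> k - 1 \<longrightarrow>
        Max (d ` {s..t}) = -1 \<or> card {i\<in>{s..t}. d i = Max (d ` {s..t})} = 1)"
proof -
  have indices: "set [1..<Suc k] = {1..k}" by auto
  obtain js ds where "mset js = mset [1..<Suc k]"
    "phi_chain (quad_map a c) r (map x js) ds" "unique_window_max ds"
    using phi_chain_arrangement[where x = x and ?is = "[1..<Suc k]",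
        OF quad_map_eq_imp_eq_or_neg[OF assms(2), of c]] assms(5)
    unfolding indices by blast
  then show ?thesis by (rule phi_chain_permutes)
qed

end
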